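(* For a finite additive poset $A$ the following are equivalent: (i) $A$ is plain; (ii) the set of all order-preserving linear functionals on $A$ is separating; (iii) there exists a separating subset of $A^*$; (iv) there is a set $S\subset A^*$ with $\bigcap_{s\in S}\operatorname{Ker}s=0$ such that for all $a,b\in A$, $a\le b$ holds if and only if $s(a)\le_t s(b)$ for all $s\in S$.
   Context: An additive poset is a pair $(A,\le)$ where $A$ is an abelian group and $\le$ is a partial order on $A$ such that for all $a,b,c\in A$: $(\ast)$ if $b\le a$ and $c\le a$ then $b+c\le a$; $(\ast\ast)$ if $a\le b$ and $a\le c$ then $a\le a+b+c$. $A$ is a $\mathbb{Z}/2\mathbb{Z}$-vector space and $A^*=\operatorname{Hom}(A,\mathbb{Z}/2\mathbb{Z})$. The trivial order $\le_t$ on $\mathbb{Z}/2\mathbb{Z}$ is $0\le_t0$, $0\le_t1$, $1\le_t1$. A functional $f\in A^*$ is order-preserving if $a\le b$ implies $f(a)\le_t f(b)$. A set $S\subset A^*$ is separating if all its elements are order-preserving and for any $a,b\in A$ with $a\not\le b$ there is $s\in S$ with $s(a)=1$, $s(b)=0$. For a set $I$, $2^I$ denotes the subsets of $I$ with symmetric difference and inclusion. An embedding of additive posets $A\to B$ is an injective group homomorphism $\varphi$ with $a\le b\iff\varphi(a)\le\varphi(b)$. $A$ is plain if it embeds in $2^I$ for some finite set $I$. *)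

theory Defs
  imports Main "HOL-Library.Z2"
begin

definition additive_poset :: "('a::ab_group_add \<Rightarrow> 'a \<Rightarrow> bool) \<Rightarrow> bool" where
  "additive_poset le \<longleftrightarrow>
     reflp le \<and> antisymp le \<and> transp le \<and>
     (\<forall>a b c. le b a \<and> le c a \<longrightarrow> le (b + c) a) \<and>
     (\<forall>a b c. le a b \<and> le a c \<longrightarrow> le a (a + b + c))"

text \<open>Elements of A* = Hom(A, Z/2Z): group homomorphisms into the field bit.\<close>
definition dual_elem :: "('a::ab_group_add \<Rightarrow> bit) \<Rightarrow> bool" where
  "dual_elem f \<longleftrightarrow> (\<forall>a b. f (a + b) = f a + f b)"

definition le_t :: "bit \<Rightarrow> bit \<Rightarrow> bool" where
  "le_t x y \<longleftrightarrow> x = 0 \<or> y = 1"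

definition order_preserving :: "('a \<Rightarrow> 'a \<Rightarrow> bool) \<Rightarrow> ('a \<Rightarrow> bit) \<Rightarrow> bool" where
  "order_preserving le f \<longleftrightarrow> (\<forall>a b. le a b \<longrightarrow> le_t (f a) (f b))"

definition separating :: "('a::ab_group_add \<Rightarrow> 'a \<Rightarrow> bool) \<Rightarrow> ('a \<Rightarrow> bit) set \<Rightarrow> bool" where
  "separating le S \<longleftrightarrow>
     (\<forall>s\<in>S. dual_elem s \<and> order_preserving le s) \<and>
     (\<forall>a b. \<not> le a b \<longrightarrow> (\<exists>s\<in>S. s a = 1 \<and> s b = 0))"

definition embeds_in_powerset :: "('a::ab_group_add \<Rightarrow> 'a \<Rightarrow> bool) \<Rightarrow> 'i set \<Rightarrow> ('a \<Rightarrow> 'i set) \<Rightarrow> bool" where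
  "embeds_in_powerset le I \<phi> \<longleftrightarrow>
     (\<forall>a. \<phi> a \<subseteq> I) \<and>
     (\<forall>a b. \<phi> (a + b) = (\<phi> a - \<phi> b) \<union> (\<phi> b - \<phi> a)) \<and>
     inj \<phi> \<and>
     (\<forall>a b. le a b \<longleftrightarrow> \<phi> a \<subseteq> \<phi> b)"

text \<open>Plain: embeds in 2^I for some finite set I (WLOG I a set of naturals).\<close>
definition plain :: "('a::ab_group_add \<Rightarrow> 'a \<Rightarrow> bool) \<Rightarrow> bool" where
  "plain le \<longleftrightarrow> (\<exists>(I::nat set) \<phi>. finite I \<and> embeds_in_powerset le I \<phi>)"

end

theory Submission
  imports Defs
begin

text \<open>A family S of order-preserving functionals separates the order exactly when
  a \<le> b is equivalent to le_t (s a) (s b) for all s \<in> S. Indexing a finite such family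
  as s_i, i \<in> I, the map sending a to the set of indices i with s_i a = 1 is then an
  embedding into 2^I; conversely the coordinate functionals of an embedding into 2^I
  separate. Triviality of the common kernel comes for free from antisymmetry.\<close>

lemma UNIV_bit: "(UNIV :: bit set) = {0, 1}"
  by (auto simp flip: bit_not_zero_iff)

instance bit :: finite
  by standard (simp add: UNIV_bit)

lemma not_le_t_iff: "\<not> le_t x y \<longleftrightarrow> x = 1 \<and> y = 0"
  by (auto simp: le_t_def)

lemma bit_add_eq_1_iff: "(x + y = (1::bit)) \<longleftrightarrow> (x = 1 \<and> y = 0) \<or> (x = 0 \<and> y = 1)"
  by (cases x; cases y) auto

lemma dual_elem_zero: "dual_elem s \<Longrightarrow> s 0 = 0"
  unfolding dual_elem_def by (metis add.right_neutral add_left_cancel)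

lemma additive_poset_antisymp: "additive_poset le \<Longrightarrow> antisymp le"
  by (simp add: additive_poset_def)

lemma separating_iff:
  assumes "S \<subseteq> {f. dual_elem f}"
  shows "separating le S \<longleftrightarrow> (\<forall>a b. le a b \<longleftrightarrow> (\<forall>s\<in>S. le_t (s a) (s b)))"
proof
  assume "separating le S"
  then show "\<forall>a b. le a b \<longleftrightarrow> (\<forall>s\<in>S. le_t (s a) (s b))"
    unfolding separating_def order_preserving_def by (metis not_le_t_iff)
next
  assume "\<forall>a b. le a b \<longleftrightarrow> (\<forall>s\<in>S. le_t (s a) (s b))"
  with assms show "separating le S"
    unfolding separating_def order_preserving_def by (auto simp: not_le_t_iff)
qed

lemma separating_superset:
  assumes "separating le S" "S \<subseteq> T" "\<forall>t\<in>T. dual_elem t \<and> order_preserving le t"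
  shows "separating le T"
  using assms unfolding separating_def by blast

lemma separating_common_kernel_trivial:
  assumes "antisymp le" "separating le S" "\<forall>s\<in>S. s a = 0"
  shows "a = 0"
proof -
  have "\<not> (\<exists>s\<in>S. s 0 = 1)"
    using assms(2) dual_elem_zero by (auto simp: separating_def)
  moreover have "\<not> (\<exists>s\<in>S. s a = 1)"
    using assms(3) by auto
  ultimately have "le a 0" and "le 0 a"
    using assms(2) unfolding separating_def by blast+
  with assms(1) show "a = 0" by (rule antisympD)
qed

lemma plain_imp_separating:
  assumes "plain le"
  shows "separating le {f. dual_elem f \<and> order_preserving le f}"
proof -
  obtain I :: "nat set" and \<phi> where \<phi>: "embeds_in_powerset le I \<phi>"
    using assms unfolding plain_def by blast
  define coord where "coord i a = (if i \<in> \<phi> a then 1 else 0 :: bit)" for i a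
  have "dual_elem (coord i)" "order_preserving le (coord i)" for i
    using \<phi> unfolding embeds_in_powerset_def dual_elem_def order_preserving_def le_t_def coord_def
    by auto
  moreover have "\<exists>i. coord i a = 1 \<and> coord i b = 0" if "\<not> le a b" for a b
    using \<phi> that unfolding embeds_in_powerset_def coord_def by auto
  ultimately show ?thesis unfolding separating_def by blast
qed

lemma separating_imp_embeds_in_powerset:
  assumes "antisymp le" "separating le (s ` I)"
  shows "embeds_in_powerset le I (\<lambda>a. {i \<in> I. s i a = 1})"
    (is "embeds_in_powerset le I ?\<phi>")
proof -
  have order: "le a b \<longleftrightarrow> ?\<phi> a \<subseteq> ?\<phi> b" for a b
  proof
    assume "le a b"
    then show "?\<phi> a \<subseteq> ?\<phi> b"
      using assms(2) unfolding separating_def order_preserving_def le_t_def by fastforce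
  next
    assume "?\<phi> a \<subseteq> ?\<phi> b"
    then have "\<not> (\<exists>t\<in>s ` I. t a = 1 \<and> t b = 0)" by auto
    then show "le a b" using assms(2) unfolding separating_def by blast
  qed
  have "?\<phi> (a + b) = (?\<phi> a - ?\<phi> b) \<union> (?\<phi> b - ?\<phi> a)" for a b
    using assms(2) unfolding separating_def dual_elem_def by (auto simp: bit_add_eq_1_iff)
  moreover have "inj ?\<phi>"
    by (rule injI) (use order assms(1) in \<open>auto intro: antisympD\<close>)
  ultimately show ?thesis
    using order unfolding embeds_in_powerset_def by blast
qed

lemma separating_imp_plain:
  assumes "antisymp le" "separating le S" "finite S"
  shows "plain le"
proof -
  obtain s where "bij_betw s {0..<card S} S"
    using ex_bij_betw_nat_finite[OF assms(3)] by blast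
  then have "separating le (s ` {0..<card S})"
    using assms(2) by (simp add: bij_betw_def)
  then have "embeds_in_powerset le {0..<card S} (\<lambda>a. {i \<in> {0..<card S}. s i a = 1})"
    by (rule separating_imp_embeds_in_powerset[OF assms(1)])
  then show ?thesis unfolding plain_def by blast
qed

lemma plain_iff_separating:
  fixes le :: "'a::{ab_group_add, finite} \<Rightarrow> 'a \<Rightarrow> bool"
  assumes "antisymp le"
  shows "plain le \<longleftrightarrow> separating le {f. dual_elem f \<and> order_preserving le f}"
proof
  assume "plain le"
  then show "separating le {f. dual_elem f \<and> order_preserving le f}"
    by (rule plain_imp_separating)
next
  assume "separating le {f. dual_elem f \<and> order_preserving le f}"
  with assms show "plain le" using finite by (rule separating_imp_plain)
qed

lemma separating_order_preserving_iff_ex_separating: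
  "separating le {f. dual_elem f \<and> order_preserving le f} \<longleftrightarrow>
     (\<exists>S. S \<subseteq> {f. dual_elem f} \<and> separating le S)"
proof
  assume "\<exists>S. S \<subseteq> {f. dual_elem f} \<and> separating le S"
  then obtain S where S: "separating le S" by blast
  moreover have "S \<subseteq> {f. dual_elem f \<and> order_preserving le f}"
    using S unfolding separating_def by blast
  ultimately show "separating le {f. dual_elem f \<and> order_preserving le f}"
    by (rule separating_superset) simp
next
  assume "separating le {f. dual_elem f \<and> order_preserving le f}"
  moreover have "{f. dual_elem f \<and> order_preserving le f} \<subseteq> {f. dual_elem f}" by blast
  ultimately show "\<exists>S. S \<subseteq> {f. dual_elem f} \<and> separating le S" by blast
qed

lemma ex_separating_iff_ex_order_reflecting:
  assumes "antisymp le"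
  shows "(\<exists>S. S \<subseteq> {f. dual_elem f} \<and> separating le S) \<longleftrightarrow>
    (\<exists>S. S \<subseteq> {f. dual_elem f} \<and> (\<forall>a. (\<forall>s\<in>S. s a = 0) \<longrightarrow> a = 0) \<and>
         (\<forall>a b. le a b \<longleftrightarrow> (\<forall>s\<in>S. le_t (s a) (s b))))"
proof
  assume "\<exists>S. S \<subseteq> {f. dual_elem f} \<and> separating le S"
  then obtain S where S: "S \<subseteq> {f. dual_elem f}" "separating le S" by blast
  have "\<forall>a. (\<forall>s\<in>S. s a = 0) \<longrightarrow> a = 0"
    using separating_common_kernel_trivial[OF assms S(2)] by blast
  moreover have "\<forall>a b. le a b \<longleftrightarrow> (\<forall>s\<in>S. le_t (s a) (s b))"
    using S(2) unfolding separating_iff[OF S(1)] .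
  ultimately show "\<exists>S. S \<subseteq> {f. dual_elem f} \<and> (\<forall>a. (\<forall>s\<in>S. s a = 0) \<longrightarrow> a = 0) \<and>
      (\<forall>a b. le a b \<longleftrightarrow> (\<forall>s\<in>S. le_t (s a) (s b)))"
    using S(1) by (intro exI[of _ S] conjI)
next
  assume "\<exists>S. S \<subseteq> {f. dual_elem f} \<and> (\<forall>a. (\<forall>s\<in>S. s a = 0) \<longrightarrow> a = 0) \<and>
      (\<forall>a b. le a b \<longleftrightarrow> (\<forall>s\<in>S. le_t (s a) (s b)))"
  then obtain S where S: "S \<subseteq> {f. dual_elem f}" "\<forall>a b. le a b \<longleftrightarrow> (\<forall>s\<in>S. le_t (s a) (s b))"
    by blast
  from S(2) have "separating le S" unfolding separating_iff[OF S(1)] .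
  with S(1) show "\<exists>S. S \<subseteq> {f. dual_elem f} \<and> separating le S" by blast
qed

theorem theorem8p1:
  fixes le :: "'a::{ab_group_add, finite} \<Rightarrow> 'a \<Rightarrow> bool"
  assumes "additive_poset le"
    and "\<forall>a::'a. a + a = 0"
  shows "(plain le \<longleftrightarrow> separating le {f. dual_elem f \<and> order_preserving le f})
       \<and> (separating le {f. dual_elem f \<and> order_preserving le f} \<longleftrightarrow>
            (\<exists>S. S \<subseteq> {f. dual_elem f} \<and> separating le S))
       \<and> ((\<exists>S. S \<subseteq> {f. dual_elem f} \<and> separating le S) \<longleftrightarrow>
            (\<exists>S. S \<subseteq> {f. dual_elem f} \<and>
                 (\<forall>a. (\<forall>s\<in>S. s a = 0) \<longrightarrow> a = 0) \<and>
                 (\<forall>a b. le a b \<longleftrightarrow> (\<forall>s\<in>S. le_t (s a) (s b)))))"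
proof -
  have "antisymp le" using assms(1) by (rule additive_poset_antisymp)
  then show ?thesis
    by (intro conjI plain_iff_separating separating_order_preserving_iff_ex_separating
        ex_separating_iff_ex_order_reflecting)
qed

end
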